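(* Let $I$ be an index set and $P_r,Q_r\in GL(n,\mathbb C)$ for $r\in I$. There exists a biholomorphic map $f\colon\mathbb C^n\to\mathbb C^n$ with $f(P_rw)=Q_rf(w)$ for all $w\in\mathbb C^n$, $r\in I$, if and only if there exists $C\in GL(n,\mathbb C)$ with $CP_r=Q_rC$ for all $r\in I$. *)

theory Defs
  imports "HOL-Analysis.Analysis"
begin

text \<open>Holomorphic maps C^n -> C^n: Frechet differentiable at every point with a
complex-linear derivative (given by a complex n x n matrix).\<close>
definition holomorphic_Cn :: "(complex ^ 'n \<Rightarrow> complex ^ 'm) \<Rightarrow> bool" where
  "holomorphic_Cn f \<longleftrightarrow>
     (\<forall>z. \<exists>L :: complex ^ 'n ^ 'm. (f has_derivative (\<lambda>h. L *v h)) (at z))"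

definition biholomorphic_Cn :: "(complex ^ 'n \<Rightarrow> complex ^ 'n) \<Rightarrow> bool" where
  "biholomorphic_Cn f \<longleftrightarrow>
     (\<exists>g. holomorphic_Cn f \<and> holomorphic_Cn g \<and> (\<forall>z. g (f z) = z) \<and> (\<forall>z. f (g z) = z))"

end

theory Submission
  imports Defs
begin

text \<open>
  If a biholomorphic f satisfies f (P r w) = Q r (f w), differentiate both sides at the
  common fixed point 0 of all the P r: by the chain rule and uniqueness of derivatives the
  Jacobian matrix L = Df(0) satisfies L P r = Q r L, and L is invertible because the chain
  rule applied to the inverse map g shows Dg(f 0) to be a two-sided inverse of L.
  Conversely, an invertible C with C P r = Q r C yields the linear biholomorphism w \<mapsto> C w.
\<close>

lemma matrix_has_derivative:
  "((\<lambda>h. (A :: 'a :: {real_normed_field, euclidean_space} ^ 'n ^ 'm) *v h) has_derivative (\<lambda>h. A *v h)) F"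
  using bounded_linear_imp_has_derivative[OF matrix_vector_mul_bounded_linear[of A]] by simp

lemma derivative_matrix_unique:
  fixes f :: "'a :: {real_normed_field, euclidean_space} ^ 'n \<Rightarrow> 'a ^ 'm"
  assumes "(f has_derivative (\<lambda>h. A *v h)) (at z)"
    and "(f has_derivative (\<lambda>h. B *v h)) (at z)"
  shows "A = B"
proof -
  have "(\<lambda>h. A *v h) = (\<lambda>h. B *v h)"
    using has_derivative_unique[OF assms] .
  then show ?thesis
    by (metis matrix_eq)
qed

lemma derivative_matrix_left_inverse:
  fixes f :: "'a :: {real_normed_field, euclidean_space} ^ 'n \<Rightarrow> 'a ^ 'm"
  assumes gf: "\<And>z. g (f z) = z"
    and L: "(f has_derivative (\<lambda>h. L *v h)) (at z)"
    and M: "(g has_derivative (\<lambda>h. M *v h)) (at (f z))"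
  shows "M ** L = mat 1"
proof -
  have "g \<circ> f = (\<lambda>h. mat 1 *v h)"
    using gf by auto
  moreover have "((g \<circ> f) has_derivative (\<lambda>h. (M ** L) *v h)) (at z)"
    using diff_chain_at[OF L M] by (simp add: o_def matrix_vector_mul_assoc)
  ultimately have "((\<lambda>h. mat 1 *v h) has_derivative (\<lambda>h. (M ** L) *v h)) (at z)"
    by simp
  from derivative_matrix_unique[OF this matrix_has_derivative] show ?thesis .
qed

lemma biholomorphic_invertible_derivative:
  assumes "biholomorphic_Cn f"
  obtains L where "invertible L" and "(f has_derivative (\<lambda>h. L *v h)) (at z)"
proof -
  obtain g where hf: "holomorphic_Cn f" and hg: "holomorphic_Cn g"
    and gf: "\<And>z. g (f z) = z" and fg: "\<And>z. f (g z) = z"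
    using assms unfolding biholomorphic_Cn_def by blast
  obtain L where L: "(f has_derivative (\<lambda>h. L *v h)) (at z)"
    using hf unfolding holomorphic_Cn_def by blast
  obtain M where M: "(g has_derivative (\<lambda>h. M *v h)) (at (f z))"
    using hg unfolding holomorphic_Cn_def by blast
  have "M ** L = mat 1"
    using derivative_matrix_left_inverse[OF gf L M] .
  moreover have "L ** M = mat 1"
    using derivative_matrix_left_inverse[of f g M "f z" L] fg M L gf by simp
  ultimately have "invertible L"
    unfolding invertible_def by blast
  with L show ?thesis
    using that by blast
qed

lemma derivative_intertwines:
  fixes f :: "'a :: {real_normed_field, euclidean_space} ^ 'n \<Rightarrow> 'a ^ 'm"
  assumes equiv: "\<And>w. f (P *v w) = Q *v f w"
    and fixed: "P *v z = z"
    and L: "(f has_derivative (\<lambda>h. L *v h)) (at z)"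
  shows "L ** P = Q ** L"
proof -
  have "(f has_derivative (\<lambda>h. L *v h)) (at (P *v z))"
    using L fixed by simp
  from diff_chain_at[OF matrix_has_derivative this]
  have "((\<lambda>w. f (P *v w)) has_derivative (\<lambda>h. (L ** P) *v h)) (at z)"
    by (simp add: o_def matrix_vector_mul_assoc)
  moreover have "((\<lambda>w. Q *v f w) has_derivative (\<lambda>h. (Q ** L) *v h)) (at z)"
    using diff_chain_at[OF L matrix_has_derivative]
    by (simp add: o_def matrix_vector_mul_assoc)
  ultimately show ?thesis
    using derivative_matrix_unique equiv by simp
qed

lemma biholomorphic_invertible_matrix:
  fixes C :: "complex ^ 'n ^ 'n"
  assumes "invertible C"
  shows "biholomorphic_Cn (\<lambda>w. C *v w)"
proof -
  obtain D where CD: "C ** D = mat 1" and DC: "D ** C = mat 1"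
    using assms unfolding invertible_def by blast
  show ?thesis
    unfolding biholomorphic_Cn_def holomorphic_Cn_def
    using matrix_has_derivative CD DC
    by (intro exI[of _ "\<lambda>w. D *v w"]) (auto simp: matrix_vector_mul_assoc)
qed

theorem theorem3p5:
  fixes I :: "'i set"
    and P Q :: "'i \<Rightarrow> complex ^ 'n ^ 'n"
  assumes "\<forall>r\<in>I. invertible (P r)"
    and "\<forall>r\<in>I. invertible (Q r)"
  shows "(\<exists>f :: complex ^ 'n \<Rightarrow> complex ^ 'n. biholomorphic_Cn f \<and>
            (\<forall>w. \<forall>r\<in>I. f (P r *v w) = Q r *v f w))
         \<longleftrightarrow> (\<exists>C :: complex ^ 'n ^ 'n. invertible C \<and> (\<forall>r\<in>I. C ** P r = Q r ** C))"
proof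
  assume "\<exists>f. biholomorphic_Cn f \<and> (\<forall>w. \<forall>r\<in>I. f (P r *v w) = Q r *v f w)"
  then obtain f where bih: "biholomorphic_Cn f"
    and equiv: "\<forall>w. \<forall>r\<in>I. f (P r *v w) = Q r *v f w"
    by blast
  obtain L where "invertible L" and L: "(f has_derivative (\<lambda>h. L *v h)) (at 0)"
    using biholomorphic_invertible_derivative[OF bih] by blast
  moreover have "\<forall>r\<in>I. L ** P r = Q r ** L"
    using derivative_intertwines[OF _ _ L] equiv by simp
  ultimately show "\<exists>C. invertible C \<and> (\<forall>r\<in>I. C ** P r = Q r ** C)"
    by blast
next
  assume "\<exists>C. invertible C \<and> (\<forall>r\<in>I. C ** P r = Q r ** C)"
  then obtain C where "invertible C" and comm: "\<forall>r\<in>I. C ** P r = Q r ** C"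
    by blast
  moreover have "\<forall>w. \<forall>r\<in>I. C *v (P r *v w) = Q r *v (C *v w)"
    using comm by (simp add: matrix_vector_mul_assoc)
  ultimately show "\<exists>f. biholomorphic_Cn f \<and> (\<forall>w. \<forall>r\<in>I. f (P r *v w) = Q r *v f w)"
    using biholomorphic_invertible_matrix by blast
qed

end
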